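(* Let $G$ be a nontrivial connected graph of order $n$ and maximum degree $\Delta(G)$. Then $$\max\{\Delta(G),\operatorname{diam}(G)\}\leq prc(G)\leq \chi'(G)+(n-1-\Delta(G)),$$ where the right-hand side equals $n$ if $G$ is class 2 and equals $n-1$ if $G$ is class 1.
   Context: All graphs are simple, finite and undirected. A path in an edge-coloured graph is a rainbow path if its edges receive pairwise distinct colours. An edge-colouring is proper if adjacent edges receive distinct colours. A connected graph $G$ with a proper edge-colouring is properly rainbow connected if every two distinct vertices are joined by a rainbow path. The proper rainbow connection number $prc(G)$ of a nontrivial connected graph $G$ is the minimum number of colours in a proper edge-colouring making $G$ properly rainbow connected. $\chi'(G)$ is the chromatic index; by Vizing's theorem $\chi'(G)\in\{\Delta(G),\Delta(G)+1\}$, and $G$ is class 1 if $\chi'(G)=\Delta(G)$ and class 2 otherwise. $\operatorname{diam}(G)$ is the diameter. *)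

theory Defs
  imports Main
begin

definition simple_graph :: "'a set \<Rightarrow> 'a set set \<Rightarrow> bool" where
  "simple_graph V E \<longleftrightarrow> finite V \<and> (\<forall>e\<in>E. e \<subseteq> V \<and> card e = 2)"

definition adj :: "'a set set \<Rightarrow> 'a \<Rightarrow> 'a \<Rightarrow> bool" where
  "adj E u v \<longleftrightarrow> {u, v} \<in> E"

fun path_edges :: "'a list \<Rightarrow> 'a set list" where
  "path_edges (x # y # xs) = {x, y} # path_edges (y # xs)"
| "path_edges _ = []"

definition is_path :: "'a set \<Rightarrow> 'a set set \<Rightarrow> 'a list \<Rightarrow> 'a \<Rightarrow> 'a \<Rightarrow> bool" where
  "is_path V E p u v \<longleftrightarrow> p \<noteq> [] \<and> hd p = u \<and> last p = v \<and> set p \<subseteq> V \<and> distinct p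
     \<and> (\<forall>e \<in> set (path_edges p). e \<in> E)"

definition connected_graph :: "'a set \<Rightarrow> 'a set set \<Rightarrow> bool" where
  "connected_graph V E \<longleftrightarrow> (\<forall>u\<in>V. \<forall>v\<in>V. \<exists>p. is_path V E p u v)"

definition degree :: "'a set set \<Rightarrow> 'a \<Rightarrow> nat" where
  "degree E v = card {e \<in> E. v \<in> e}"

definition max_degree :: "'a set \<Rightarrow> 'a set set \<Rightarrow> nat" where
  "max_degree V E = Max (degree E ` V)"

definition dist :: "'a set \<Rightarrow> 'a set set \<Rightarrow> 'a \<Rightarrow> 'a \<Rightarrow> nat" where
  "dist V E u v = (LEAST k. \<exists>p. is_path V E p u v \<and> length (path_edges p) = k)"

definition diam :: "'a set \<Rightarrow> 'a set set \<Rightarrow> nat" where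
  "diam V E = Max {dist V E u v | u v. u \<in> V \<and> v \<in> V}"

definition proper_edge_colouring :: "'a set set \<Rightarrow> nat \<Rightarrow> ('a set \<Rightarrow> nat) \<Rightarrow> bool" where
  "proper_edge_colouring E k c \<longleftrightarrow> c ` E \<subseteq> {..<k}
     \<and> (\<forall>e\<in>E. \<forall>f\<in>E. e \<noteq> f \<and> e \<inter> f \<noteq> {} \<longrightarrow> c e \<noteq> c f)"

definition chromatic_index :: "'a set set \<Rightarrow> nat" where
  "chromatic_index E = (LEAST k. \<exists>c. proper_edge_colouring E k c)"

definition rainbow_path :: "'a set \<Rightarrow> 'a set set \<Rightarrow> ('a set \<Rightarrow> nat) \<Rightarrow> 'a list \<Rightarrow> 'a \<Rightarrow> 'a \<Rightarrow> bool" where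
  "rainbow_path V E c p u v \<longleftrightarrow> is_path V E p u v \<and> distinct (map c (path_edges p))"

definition properly_rainbow_connected :: "'a set \<Rightarrow> 'a set set \<Rightarrow> ('a set \<Rightarrow> nat) \<Rightarrow> bool" where
  "properly_rainbow_connected V E c \<longleftrightarrow>
     (\<forall>u\<in>V. \<forall>v\<in>V. u \<noteq> v \<longrightarrow> (\<exists>p. rainbow_path V E c p u v))"

definition prc :: "'a set \<Rightarrow> 'a set set \<Rightarrow> nat" where
  "prc V E = (LEAST k. \<exists>c. proper_edge_colouring E k c \<and> properly_rainbow_connected V E c)"

definition class1 :: "'a set \<Rightarrow> 'a set set \<Rightarrow> bool" where
  "class1 V E \<longleftrightarrow> chromatic_index E = max_degree V E"

definition class2 :: "'a set \<Rightarrow> 'a set set \<Rightarrow> bool" where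
  "class2 V E \<longleftrightarrow> \<not> class1 V E"

end

theory Submission
  imports Defs "HOL-Combinatorics.Transposition"
begin

text \<open>Lower bounds: a proper colouring uses distinct colours at a vertex of maximum degree, and a
  rainbow path has no more edges than there are colours, so it is at least as long as the distance.

  Upper bound: fix a proper colouring with \<open>\<chi>'\<close> colours and a vertex v0 of maximum degree.
  A breadth-first search tree rooted at v0 consists of the \<open>\<Delta>\<close> edges at v0 and, for each of
  the n - 1 - \<open>\<Delta>\<close> non-neighbours, one edge towards v0. Recolouring these parent edges with
  fresh, pairwise distinct colours keeps the colouring proper and makes it injective on the tree,
  so paths in the tree are rainbow. The values n and n - 1 of the bound come from Vizing's theorem
  \<open>\<chi>' \<le> \<Delta> + 1\<close>, proved by the recolouring argument of Ehrenfeucht, Faber and Kierstead.\<close>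

lemma length_path_edges: "length (path_edges p) = length p - 1"
  by (induction p rule: path_edges.induct) auto

lemma path_edges_append: "path_edges (xs @ y # ys) = path_edges (xs @ [y]) @ path_edges (y # ys)"
proof (induction xs)
  case (Cons a xs)
  then show ?case by (cases xs) auto
qed simp

lemma path_edge_subset: "e \<in> set (path_edges p) \<Longrightarrow> e \<subseteq> set p"
  by (induction p rule: path_edges.induct) auto

lemma distinct_path_edges: "distinct p \<Longrightarrow> distinct (path_edges p)"
proof (induction p rule: path_edges.induct)
  case (1 x y xs)
  then have "{x, y} \<notin> set (path_edges (y # xs))" using path_edge_subset by fastforce
  with 1 show ?case by simp
qed auto

lemma path_edges_inner_vertex:
  assumes "distinct p" "x \<in> set p" "x \<noteq> hd p" "x \<noteq> last p"
  obtains a b where "a \<noteq> b" "{a, x} \<in> set (path_edges p)" "{x, b} \<in> set (path_edges p)"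
proof -
  obtain us ws where p: "p = us @ x # ws" using split_list[OF assms(2)] by blast
  with assms(3,4) have "us \<noteq> []" "ws \<noteq> []" by auto
  then have p': "p = butlast us @ last us # x # hd ws # tl ws" using p by simp
  then have "set (path_edges (last us # x # hd ws # tl ws)) \<subseteq> set (path_edges p)"
    using path_edges_append[of "butlast us" "last us" "x # hd ws # tl ws"] by auto
  moreover have "last us \<noteq> hd ws" using assms(1) p' by auto
  ultimately show ?thesis using that by simp
qed

lemma path_edges_last_edge:
  assumes "p \<noteq> []" "hd p \<noteq> last p"
  obtains b where "{b, last p} \<in> set (path_edges p)"
proof -
  obtain xs y where p: "p = xs @ [y]" using assms(1) rev_exhaust by blast
  with assms(2) obtain ys b where "xs = ys @ [b]" by (cases xs rule: rev_cases) auto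
  with p have "{b, last p} \<in> set (path_edges p)" using path_edges_append[of ys b "[y]"] by simp
  then show ?thesis by (rule that)
qed

lemma is_path_Cons:
  assumes "is_path V E (u # p) u v" "p \<noteq> []"
  shows "{u, hd p} \<in> E" "is_path V E p (hd p) v"
  using assms by (auto simp: is_path_def neq_Nil_conv)

lemma is_path_suffix:
  assumes "is_path V E (xs @ ys) u v" "ys \<noteq> []"
  shows "is_path V E ys (hd ys) v"
proof -
  have "set (path_edges ys) \<subseteq> set (path_edges (xs @ ys))"
    using path_edges_append[of xs "hd ys" "tl ys"] \<open>ys \<noteq> []\<close> by simp
  with assms show ?thesis by (auto simp: is_path_def)
qed

lemma is_path_if_rtranclp:
  assumes "\<forall>e\<in>E. e \<subseteq> V" "v \<in> V" "(adj E)\<^sup>*\<^sup>* u v"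
  shows "\<exists>p. is_path V E p u v"
  using assms(3)
proof (induction rule: converse_rtranclp_induct)
  case base
  have "is_path V E [v] v v" using assms(2) by (simp add: is_path_def)
  then show ?case by blast
next
  case (step u w)
  then obtain p where p: "is_path V E p w v" by blast
  show ?case
  proof (cases "u \<in> set p")
    case True
    then obtain xs ys where "p = xs @ u # ys" by (meson split_list)
    then show ?thesis using is_path_suffix[of V E xs "u # ys" w v] p by auto
  next
    case False
    have "{u, w} \<in> E" using step(1) by (simp add: adj_def)
    moreover have "u \<in> V" using assms(1) calculation by blast
    moreover have "path_edges (u # p) = {u, w} # path_edges p"
      using p by (cases p) (auto simp: is_path_def)
    ultimately have "is_path V E (u # p) u v"
      using p False by (auto simp: is_path_def)
    then show ?thesis by blast
  qed
qed

lemma connected_graph_if_reaches_root: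
  assumes "\<forall>e\<in>E. e \<subseteq> V" "r \<in> V" "\<forall>u\<in>V. (adj E)\<^sup>*\<^sup>* u r"
  shows "connected_graph V E"
  unfolding connected_graph_def
proof (intro ballI)
  fix u w assume "u \<in> V" "w \<in> V"
  have "(conversep (adj E))\<^sup>*\<^sup>* r w"
    using assms(3) \<open>w \<in> V\<close> by (intro rtranclp_converseI) blast
  moreover have "conversep (adj E) = adj E" by (intro ext) (simp add: adj_def insert_commute)
  ultimately have "(adj E)\<^sup>*\<^sup>* r w" by (simp only:)
  then have "(adj E)\<^sup>*\<^sup>* u w" using assms(3) \<open>u \<in> V\<close> rtranclp_trans by fast
  then show "\<exists>p. is_path V E p u w" by (rule is_path_if_rtranclp[OF assms(1) \<open>w \<in> V\<close>])
qed

lemma exists_maximal_path: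
  assumes "finite (\<Union>H)"
  obtains p where "p \<noteq> []" "last p = y" "distinct p" "set (path_edges p) \<subseteq> H"
    "\<forall>w. {hd p, w} \<in> H \<longrightarrow> w \<in> set p"
proof -
  define P where "P p \<longleftrightarrow> p \<noteq> [] \<and> last p = y \<and> distinct p \<and> set p \<subseteq> insert y (\<Union>H)
    \<and> set (path_edges p) \<subseteq> H" for p
  have "length p < Suc (card (insert y (\<Union>H)))" if "P p" for p
    using that assms distinct_card[of p] card_mono[of "insert y (\<Union>H)" "set p"]
    unfolding P_def by fastforce
  moreover have "P [y]" unfolding P_def by simp
  ultimately obtain p where p: "P p" and longest: "\<And>q. P q \<Longrightarrow> length q \<le> length p"
    using ex_has_greatest_nat[of P "[y]" length] by blast
  have "w \<in> set p" if "{hd p, w} \<in> H" for w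
  proof (rule ccontr)
    assume "w \<notin> set p"
    with p that have "P (w # p)" unfolding P_def by (cases p) (auto simp: insert_commute)
    then show False using longest[of "w # p"] by simp
  qed
  with p that show ?thesis unfolding P_def by blast
qed

lemma dist_le_length: "is_path V E p u v \<Longrightarrow> dist V E u v \<le> length (path_edges p)"
  unfolding dist_def by (rule Least_le) blast

lemma dist_attained:
  assumes "connected_graph V E" "u \<in> V" "v \<in> V"
  obtains p where "is_path V E p u v" "length (path_edges p) = dist V E u v"
proof -
  have "\<exists>k p. is_path V E p u v \<and> length (path_edges p) = k"
    using assms unfolding connected_graph_def by blast
  then have "\<exists>p. is_path V E p u v \<and> length (path_edges p) = dist V E u v"
    unfolding dist_def by (rule LeastI_ex)
  then show ?thesis using that by blast
qed

lemma exists_closer_neighbour: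
  assumes "connected_graph V E" "u \<in> V" "v \<in> V" "u \<noteq> v"
  obtains w where "{u, w} \<in> E" "w \<in> V" "dist V E w v < dist V E u v"
proof -
  obtain p where p: "is_path V E p u v" and len: "length (path_edges p) = dist V E u v"
    using dist_attained[OF assms(1-3)] .
  then obtain q where q: "p = u # q" unfolding is_path_def by (cases p) auto
  with p assms(4) have "q \<noteq> []" unfolding is_path_def by auto
  with p q have "{u, hd q} \<in> E" "is_path V E q (hd q) v" using is_path_Cons[of V E u q v] by simp_all
  moreover from this have "hd q \<in> V" unfolding is_path_def by auto
  moreover have "dist V E (hd q) v < dist V E u v"
    using dist_le_length[OF calculation(2)] len q \<open>q \<noteq> []\<close>
    by (auto simp: length_path_edges neq_Nil_conv)
  ultimately show ?thesis using that by blast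
qed

lemma card_2_obtain:
  assumes "card e = 2" "z \<in> e"
  obtains w where "e = {z, w}" "w \<noteq> z"
  using assms by (auto simp: card_2_iff doubleton_eq_iff)

lemma edge_endpoints_distinct: "\<forall>e\<in>E. card e = 2 \<Longrightarrow> {v, z} \<in> E \<Longrightarrow> v \<noteq> z"
  by fastforce

lemma simple_graph_finite_edges: "simple_graph V E \<Longrightarrow> finite E"
  unfolding simple_graph_def by (meson Pow_iff finite_Pow_iff rev_finite_subset subsetI)

lemma finite_neighbours:
  assumes "finite E" "\<forall>e\<in>E. card e = 2"
  shows "finite {z. {v, z} \<in> E}"
proof -
  have "{z. {v, z} \<in> E} \<subseteq> \<Union>E" by blast
  moreover have "finite (\<Union>E)" using assms by (metis card.infinite finite_Union zero_neq_numeral)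
  ultimately show ?thesis by (rule finite_subset)
qed

lemma degree_eq_card_neighbours:
  assumes "finite E" "\<forall>e\<in>E. card e = 2"
  shows "degree E v = card {z. {v, z} \<in> E}"
proof -
  have "e \<in> (\<lambda>z. {v, z}) ` {z. {v, z} \<in> E}" if "e \<in> E" "v \<in> e" for e
  proof -
    from assms(2) that obtain w where "e = {v, w}" by (auto elim: card_2_obtain[of e v])
    then show ?thesis using that(1) by blast
  qed
  then have "{e\<in>E. v \<in> e} = (\<lambda>z. {v, z}) ` {z. {v, z} \<in> E}" by blast
  moreover have "inj_on (\<lambda>z. {v, z}) A" for A by (auto simp: inj_on_def doubleton_eq_iff)
  ultimately show ?thesis unfolding degree_def by (simp add: card_image)
qed

lemma degree_delete_vertex:
  assumes "finite E" "\<forall>e\<in>E. card e = 2" "{v, z} \<in> E"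
  shows "degree {e\<in>E. v \<notin> e} z = degree E z - 1" "1 \<le> degree E z"
proof -
  have "e = {v, z}" if "e \<in> E" "z \<in> e" "v \<in> e" for e
  proof -
    from assms(2) that obtain w where "e = {z, w}" by (auto elim: card_2_obtain[of e z])
    then show ?thesis using that edge_endpoints_distinct[OF assms(2,3)] by auto
  qed
  then have "{e\<in>E. z \<in> e} = insert {v, z} {e\<in>{e\<in>E. v \<notin> e}. z \<in> e}"
    using assms(3) by blast
  moreover have "finite {e\<in>{e\<in>E. v \<notin> e}. z \<in> e}" using assms(1) by simp
  ultimately have "degree E z = Suc (degree {e\<in>E. v \<notin> e} z)"
    unfolding degree_def by simp
  then show "degree {e\<in>E. v \<notin> e} z = degree E z - 1" "1 \<le> degree E z" by simp_all
qed

definition matching :: "'a set set \<Rightarrow> bool" where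
  "matching M \<longleftrightarrow> (\<forall>e1\<in>M. \<forall>e2\<in>M. e1 \<noteq> e2 \<longrightarrow> e1 \<inter> e2 = {})"

lemma degree_Diff_matching:
  assumes "finite E" "M \<subseteq> E" "matching M"
  shows "degree (E - M) z = degree E z - (if \<exists>e\<in>M. z \<in> e then 1 else 0)"
proof (cases "\<exists>e\<in>M. z \<in> e")
  case True
  then obtain e where e: "e \<in> M" "z \<in> e" by blast
  with assms(3) have "{e'\<in>M. z \<in> e'} = {e}" unfolding matching_def by blast
  then have "{e'\<in>E - M. z \<in> e'} = {e'\<in>E. z \<in> e'} - {e}" by blast
  moreover have "e \<in> {e'\<in>E. z \<in> e'}" using e assms(2) by blast
  ultimately show ?thesis using True assms(1) unfolding degree_def by (simp add: card_Diff_singleton)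
next
  case False
  then have "{e'\<in>E - M. z \<in> e'} = {e'\<in>E. z \<in> e'}" by blast
  then show ?thesis using False by (simp add: degree_def)
qed

lemma degree_le_max_degree:
  assumes "simple_graph V E"
  shows "degree E v \<le> max_degree V E"
proof (cases "v \<in> V")
  case True
  then show ?thesis using assms unfolding simple_graph_def max_degree_def by simp
next
  case False
  then have "{e\<in>E. v \<in> e} = {}" using assms unfolding simple_graph_def by blast
  then show ?thesis unfolding degree_def by (metis card.empty le0)
qed

lemma max_degree_attained:
  assumes "simple_graph V E" "V \<noteq> {}"
  obtains v where "v \<in> V" "degree E v = max_degree V E"
proof -
  have "max_degree V E \<in> degree E ` V"
    using assms unfolding simple_graph_def max_degree_def by (intro Max_in) auto
  then show ?thesis by (metis imageE that)
qed

lemma card_non_neighbours: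
  assumes "simple_graph V E" "v \<in> V"
  shows "card (V - {v} - {z. {v, z} \<in> E}) = card V - 1 - degree E v" "degree E v \<le> card V - 1"
proof -
  have fin: "finite V" "finite E" and two: "\<forall>e\<in>E. card e = 2"
    using assms(1) simple_graph_finite_edges unfolding simple_graph_def by auto
  have "{z. {v, z} \<in> E} \<subseteq> V - {v}"
    using assms(1) edge_endpoints_distinct[OF two] unfolding simple_graph_def by blast
  moreover have "card {z. {v, z} \<in> E} = degree E v"
    using degree_eq_card_neighbours[OF fin(2) two] by simp
  moreover have "card (V - {v}) = card V - 1" using fin(1) assms(2) by simp
  moreover have "finite {z. {v, z} \<in> E}" using finite_neighbours[OF fin(2) two] .
  ultimately show "card (V - {v} - {z. {v, z} \<in> E}) = card V - 1 - degree E v"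
    "degree E v \<le> card V - 1"
    using fin(1) card_Diff_subset[of "{z. {v, z} \<in> E}" "V - {v}"]
      card_mono[of "V - {v}" "{z. {v, z} \<in> E}"] by auto
qed

section \<open>Proper edge colourings and Kempe changes\<close>

definition misses :: "'a set set \<Rightarrow> ('a set \<Rightarrow> nat) \<Rightarrow> 'a \<Rightarrow> nat \<Rightarrow> bool" where
  "misses F f z a \<longleftrightarrow> (\<forall>e\<in>F. z \<in> e \<longrightarrow> f e \<noteq> a)"

lemma proper_edge_colouring_eq:
  assumes "proper_edge_colouring F k f" "e1 \<in> F" "e2 \<in> F" "z \<in> e1" "z \<in> e2" "f e1 = f e2"
  shows "e1 = e2"
  using assms unfolding proper_edge_colouring_def by blast

lemma proper_edge_colouring_inj_on_star:
  "proper_edge_colouring F k f \<Longrightarrow> inj_on f {e\<in>F. z \<in> e}"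
  by (rule inj_onI) (metis (mono_tags, lifting) mem_Collect_eq proper_edge_colouring_eq)

lemma degree_le_colours:
  assumes "proper_edge_colouring F k f" "finite F"
  shows "degree F z \<le> k"
proof -
  have "f ` {e\<in>F. z \<in> e} \<subseteq> {..<k}" using assms(1) by (auto simp: proper_edge_colouring_def)
  with card_inj_on_le[OF proper_edge_colouring_inj_on_star[OF assms(1)]]
  have "card {e\<in>F. z \<in> e} \<le> card {..<k}" by blast
  then show ?thesis unfolding degree_def by simp
qed

lemma max_degree_le_colours:
  assumes "simple_graph V E" "V \<noteq> {}" "proper_edge_colouring E k c"
  shows "max_degree V E \<le> k"
  using max_degree_attained[OF assms(1,2)]
    degree_le_colours[OF assms(3) simple_graph_finite_edges[OF assms(1)]] by metis

lemma card_missing_colours: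
  assumes "proper_edge_colouring F k f" "finite F"
  shows "card {a. a < k \<and> misses F f z a} = k - degree F z"
proof -
  have "{a. a < k \<and> misses F f z a} = {..<k} - f ` {e\<in>F. z \<in> e}"
    by (auto simp: misses_def)
  moreover have "f ` {e\<in>F. z \<in> e} \<subseteq> {..<k}" using assms(1) by (auto simp: proper_edge_colouring_def)
  moreover have "card (f ` {e\<in>F. z \<in> e}) = degree F z"
    unfolding degree_def by (rule card_image[OF proper_edge_colouring_inj_on_star[OF assms(1)]])
  ultimately show ?thesis using assms(2) by (simp add: card_Diff_subset)
qed

lemma matching_colour_class:
  "proper_edge_colouring F k f \<Longrightarrow> matching {e\<in>F. f e = a}"
  unfolding matching_def using proper_edge_colouring_eq by fastforce

lemma proper_edge_colouring_remove_colour: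
  assumes "proper_edge_colouring F (Suc k) f" "a \<le> k"
  shows "proper_edge_colouring {e\<in>F. f e \<noteq> a} k (\<lambda>e. if f e = k then a else f e)"
  using assms unfolding proper_edge_colouring_def by (auto simp: less_Suc_eq)

lemma proper_edge_colouring_add_matching:
  assumes "proper_edge_colouring (E - M) k c" "matching M"
  shows "proper_edge_colouring E (Suc k) (\<lambda>e. if e \<in> M then k else c e)"
  using assms unfolding proper_edge_colouring_def matching_def by (auto simp: less_Suc_eq)

lemma proper_edge_colouring_kempe_change:
  assumes "proper_edge_colouring F k f" "\<alpha> < k" "\<beta> < k" "S \<subseteq> F"
    and "\<forall>e\<in>S. f e \<in> {\<alpha>, \<beta>}"
    and "\<forall>e\<in>S. \<forall>e'\<in>F. e \<inter> e' \<noteq> {} \<longrightarrow> f e' \<in> {\<alpha>, \<beta>} \<longrightarrow> e' \<in> S"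
  shows "proper_edge_colouring F k (\<lambda>e. if e \<in> S then transpose \<alpha> \<beta> (f e) else f e)"
  unfolding proper_edge_colouring_def
proof (intro conjI ballI impI)
  show "(\<lambda>e. if e \<in> S then transpose \<alpha> \<beta> (f e) else f e) ` F \<subseteq> {..<k}"
    using assms(1-3) by (auto simp: proper_edge_colouring_def transpose_def)
  fix e1 e2 assume e12: "e1 \<in> F" "e2 \<in> F" "e1 \<noteq> e2 \<and> e1 \<inter> e2 \<noteq> {}"
  then have "f e1 \<noteq> f e2" using assms(1) by (auto simp: proper_edge_colouring_def)
  moreover have "f e2 \<notin> {\<alpha>, \<beta>}" if "e1 \<in> S" "e2 \<notin> S" using assms(6) that e12 by blast
  moreover have "f e1 \<notin> {\<alpha>, \<beta>}" if "e2 \<in> S" "e1 \<notin> S"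
    using assms(6) that e12 by (metis Int_commute)
  ultimately show "(if e1 \<in> S then transpose \<alpha> \<beta> (f e1) else f e1)
      \<noteq> (if e2 \<in> S then transpose \<alpha> \<beta> (f e2) else f e2)"
    using assms(5) by (auto simp: transpose_eq_iff)
qed

lemma two_coloured_path_inner_vertex:
  assumes f: "proper_edge_colouring F k f" and pH: "set (path_edges p) \<subseteq> {e\<in>F. f e \<in> {\<alpha>, \<beta>}}"
    and p: "distinct p" "x \<in> set p" "x \<noteq> hd p" "x \<noteq> last p"
  obtains e e' where "e \<in> set (path_edges p)" "e' \<in> set (path_edges p)" "x \<in> e" "x \<in> e'"
    "f e = \<alpha>" "f e' = \<beta>"
proof -
  obtain a b where "a \<noteq> b" and ab: "{a, x} \<in> set (path_edges p)" "{x, b} \<in> set (path_edges p)"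
    using path_edges_inner_vertex[OF p] by metis
  then have "{a, x} \<noteq> {x, b}" by (auto simp: doubleton_eq_iff)
  then have "f {a, x} \<noteq> f {x, b}" using proper_edge_colouring_eq[OF f] ab pH by blast
  moreover have "f {a, x} \<in> {\<alpha>, \<beta>}" "f {x, b} \<in> {\<alpha>, \<beta>}" using ab pH by auto
  ultimately consider "f {a, x} = \<alpha>" "f {x, b} = \<beta>" | "f {a, x} = \<beta>" "f {x, b} = \<alpha>" by auto
  then show ?thesis
  proof cases
    case 1
    then show ?thesis using that ab by blast
  next
    case 2
    then show ?thesis using that ab by blast
  qed
qed

lemma maximal_two_coloured_path_closed:
  assumes two: "\<forall>e\<in>F. card e = 2" and f: "proper_edge_colouring F k f"
    and p: "p \<noteq> []" "last p = y" "distinct p"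
    and pH: "set (path_edges p) \<subseteq> {e\<in>F. f e \<in> {\<alpha>, \<beta>}}"
    and maximal: "\<forall>w. {hd p, w} \<in> {e\<in>F. f e \<in> {\<alpha>, \<beta>}} \<longrightarrow> w \<in> set p"
    and y\<alpha>: "misses F f y \<alpha>"
    and e: "e \<in> F" "f e \<in> {\<alpha>, \<beta>}" "x \<in> e" "x \<in> set p"
  shows "e \<in> set (path_edges p)"
proof -
  have off_hd: "e \<in> set (path_edges p)"
    if e: "e \<in> F" "f e \<in> {\<alpha>, \<beta>}" "x \<in> e" "x \<in> set p" "x \<noteq> hd p" for e x
  proof (cases "x = y")
    case True
    then obtain b where b: "{b, y} \<in> set (path_edges p)" using path_edges_last_edge[of p] p e(5) by metis
    have "f e \<noteq> \<alpha>" "f {b, y} \<noteq> \<alpha>" using y\<alpha> e(1,3) True b pH unfolding misses_def by auto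
    then have "f e = f {b, y}" using e(2) b pH by auto
    then show ?thesis using proper_edge_colouring_eq[OF f, of e "{b, y}" y] e True b pH by auto
  next
    case False
    then obtain e1 e2 where "e1 \<in> set (path_edges p)" "e2 \<in> set (path_edges p)" "x \<in> e1" "x \<in> e2"
      "f e1 = \<alpha>" "f e2 = \<beta>"
      using two_coloured_path_inner_vertex[OF f pH p(3) e(4,5)] p(2) by metis
    then show ?thesis
      using proper_edge_colouring_eq[OF f, of e e1 x] proper_edge_colouring_eq[OF f, of e e2 x] e pH
      by auto
  qed
  show ?thesis
  proof (cases "x = hd p")
    case True
    obtain w where w: "e = {x, w}" "w \<noteq> x" using card_2_obtain[of e x] two e(1,3) by blast
    then have "w \<in> set p" using maximal e(1,2) True by blast
    then show ?thesis using off_hd[of e w] e(1,2) w True by blast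
  qed (use off_hd e in blast)
qed

text \<open>Swap the two colours along a maximal two-coloured path ending at y; the vertex u is the
  other end of that path.\<close>

lemma kempe_chain:
  assumes fin: "finite F" and two: "\<forall>e\<in>F. card e = 2" and f: "proper_edge_colouring F k f"
    and colours: "\<alpha> < k" "\<beta> < k" "\<alpha> \<noteq> \<beta>"
    and y\<alpha>: "misses F f y \<alpha>" and y\<beta>: "\<not> misses F f y \<beta>"
  obtains f' u where "proper_edge_colouring F k f'" "misses F f' y \<beta>"
    "\<And>z. z \<noteq> y \<Longrightarrow> z \<noteq> u \<Longrightarrow> misses F f' z \<beta> \<Longrightarrow> misses F f z \<beta>"
proof -
  define H where "H = {e\<in>F. f e \<in> {\<alpha>, \<beta>}}"
  have "finite (\<Union>H)"
  proof (rule finite_Union)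
    show "finite H" using fin unfolding H_def by simp
    show "finite e" if "e \<in> H" for e
      using two that unfolding H_def by (intro card_ge_0_finite) simp
  qed
  then obtain p where p: "p \<noteq> []" "last p = y" "distinct p" and pH: "set (path_edges p) \<subseteq> H"
    and maximal: "\<forall>w. {hd p, w} \<in> H \<longrightarrow> w \<in> set p"
    by (rule exists_maximal_path)
  define S where "S = set (path_edges p)"
  have closed: "e \<in> S" if "e \<in> F" "f e \<in> {\<alpha>, \<beta>}" "x \<in> e" "x \<in> set p" for e x
    using maximal_two_coloured_path_closed[OF two f p pH[unfolded H_def] maximal[unfolded H_def] y\<alpha>]
      that
    unfolding S_def by blast
  have SF: "S \<subseteq> F" "\<forall>e\<in>S. f e \<in> {\<alpha>, \<beta>}" using pH unfolding S_def H_def by auto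
  define f' where "f' e = (if e \<in> S then transpose \<alpha> \<beta> (f e) else f e)" for e
  have "proper_edge_colouring F k f'"
    unfolding f'_def
  proof (rule proper_edge_colouring_kempe_change[OF f colours(1,2) SF])
    show "\<forall>e\<in>S. \<forall>e'\<in>F. e \<inter> e' \<noteq> {} \<longrightarrow> f e' \<in> {\<alpha>, \<beta>} \<longrightarrow> e' \<in> S"
      using closed path_edge_subset unfolding S_def by blast
  qed
  moreover have "misses F f' y \<beta>"
    unfolding misses_def
  proof (intro ballI impI)
    fix e assume e: "e \<in> F" "y \<in> e"
    show "f' e \<noteq> \<beta>"
    proof (cases "e \<in> S")
      case True
      then have "f e = \<beta>" using y\<alpha> e SF unfolding misses_def by auto
      then show ?thesis using True colours(3) unfolding f'_def by simp
    next
      case False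
      then have "f e \<notin> {\<alpha>, \<beta>}" using closed e p by auto
      then show ?thesis using False unfolding f'_def by auto
    qed
  qed
  moreover have "misses F f z \<beta>" if z: "z \<noteq> y" "z \<noteq> hd p" "misses F f' z \<beta>" for z
  proof (cases "z \<in> set p")
    case True
    then obtain e where "e \<in> S" "z \<in> e" "f e = \<alpha>"
      using two_coloured_path_inner_vertex[OF f pH[unfolded H_def] p(3) True z(2)] z(1) p(2)
      unfolding S_def by metis
    with SF have False using z(3) unfolding misses_def f'_def by auto
    then show ?thesis ..
  next
    case False
    then have "e \<notin> S" if "z \<in> e" for e using that path_edge_subset unfolding S_def by blast
    then show ?thesis using z(3) unfolding misses_def f'_def by auto
  qed
  ultimately show ?thesis using that by blast
qed

section \<open>Vizing's theorem\<close>

lemma exists_rarely_related: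
  assumes "finite T" "card T < k" "\<forall>z\<in>T. card {a. a < k \<and> R z a} \<le> 2"
  shows "\<exists>a<k. card {z\<in>T. R z a} \<le> 1"
proof (rule ccontr)
  assume "\<not> ?thesis"
  then have "(\<Sum>a<k. 2) \<le> (\<Sum>a<k. card {z\<in>T. R z a})" by (intro sum_mono) auto
  also have "\<dots> = (\<Sum>a<k. \<Sum>z\<in>T. of_bool (R z a))" using assms(1) by (simp add: Int_def)
  also have "\<dots> = (\<Sum>z\<in>T. \<Sum>a<k. of_bool (R z a))" by (rule sum.swap)
  also have "\<dots> = (\<Sum>z\<in>T. card {a. a < k \<and> R z a})" by (simp add: Int_def lessThan_def)
  also have "\<dots> \<le> (\<Sum>z\<in>T. 2)" using assms(3) by (intro sum_mono) auto
  finally show False using assms(2) by simp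
qed

lemma card_missing_colours_neighbour:
  assumes "finite E" "\<forall>e\<in>E. card e = 2" "proper_edge_colouring {e\<in>E. v \<notin> e} k f" "{v, z} \<in> E"
  shows "card {a. a < k \<and> misses {e\<in>E. v \<notin> e} f z a} = Suc k - degree E z"
  using card_missing_colours[OF assms(3)] degree_delete_vertex[OF assms(1,2,4)] assms(1) by simp

text \<open>The neighbours of degree k - 1 other than y0 miss two colours each and are fewer than k.\<close>

lemma exists_colour_rarely_missed:
  assumes fin: "finite E" and two: "\<forall>e\<in>E. card e = 2"
    and f: "proper_edge_colouring {e\<in>E. v \<notin> e} k f"
    and dv: "degree E v \<le> k" and y0: "{v, y0} \<in> E"
    and lt: "\<forall>z. {v, z} \<in> E \<longrightarrow> z \<noteq> y0 \<longrightarrow> degree E z < k"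
  obtains \<beta> x where "\<beta> < k" "\<forall>z. {v, z} \<in> E \<longrightarrow> z \<noteq> y0 \<longrightarrow> k \<le> Suc (degree E z)
    \<longrightarrow> misses {e\<in>E. v \<notin> e} f z \<beta> \<longrightarrow> z = x"
proof -
  define F where "F = {e\<in>E. v \<notin> e}"
  define N where "N = {z. {v, z} \<in> E}"
  define T where "T = {z\<in>N. z \<noteq> y0 \<and> k \<le> Suc (degree E z)}"
  have finN: "finite N" unfolding N_def using finite_neighbours[OF fin two] .
  then have "finite T" unfolding T_def by simp
  moreover have "card T < k"
  proof -
    have "T \<subseteq> N - {y0}" unfolding T_def by blast
    then have "card T \<le> card N - 1" using finN y0 card_mono[of "N - {y0}" T] unfolding N_def by simp
    moreover have "card N = degree E v" "0 < card N"
      using degree_eq_card_neighbours[OF fin two] finN y0 unfolding N_def by (auto simp: card_gt_0_iff)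
    ultimately show ?thesis using dv by linarith
  qed
  moreover have "card {a. a < k \<and> misses F f z a} \<le> 2" if "z \<in> T" for z
  proof -
    have "{v, z} \<in> E" "k \<le> Suc (degree E z)" using that unfolding T_def N_def by auto
    then show ?thesis using card_missing_colours_neighbour[OF fin two f, of z] unfolding F_def by simp
  qed
  ultimately obtain \<beta> where "\<beta> < k" and "card {z\<in>T. misses F f z \<beta>} \<le> 1"
    using exists_rarely_related[of T k "\<lambda>z a. misses F f z a"] by blast
  moreover have "finite {z\<in>T. misses F f z \<beta>}" using \<open>finite T\<close> by simp
  ultimately have unique: "z1 = z2" if "z1 \<in> T" "z2 \<in> T" "misses F f z1 \<beta>" "misses F f z2 \<beta>" for z1 z2
    using that card_le_Suc0_iff_eq by (metis (no_types, lifting) One_nat_def mem_Collect_eq)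
  obtain x where "\<forall>z\<in>T. misses F f z \<beta> \<longrightarrow> z = x"
  proof (cases "\<exists>z\<in>T. misses F f z \<beta>")
    case True
    then show ?thesis using unique that by blast
  qed (use that in blast)
  with \<open>\<beta> < k\<close> show ?thesis using that unfolding T_def N_def F_def by blast
qed

text \<open>The last two conclusions say that after deleting the edge vy and the colour class a,
  every neighbour of v has degree at most k - 1, and all but x have degree less than k - 1.
  If no suitable colour exists at once, a Kempe change at y0 creates one.\<close>

lemma exists_reducing_colour:
  assumes fin: "finite E" and two: "\<forall>e\<in>E. card e = 2"
    and f: "proper_edge_colouring {e\<in>E. v \<notin> e} k f"
    and dv: "degree E v \<le> k" and y0: "{v, y0} \<in> E"
    and le: "\<forall>z. {v, z} \<in> E \<longrightarrow> degree E z \<le> k"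
    and lt: "\<forall>z. {v, z} \<in> E \<longrightarrow> z \<noteq> y0 \<longrightarrow> degree E z < k"
  obtains f' y a x where "proper_edge_colouring {e\<in>E. v \<notin> e} k f'" "{v, y} \<in> E" "a < k"
    "misses {e\<in>E. v \<notin> e} f' y a"
    "\<forall>z. {v, z} \<in> E \<longrightarrow> z \<noteq> y \<longrightarrow> misses {e\<in>E. v \<notin> e} f' z a \<longrightarrow> degree E z < k"
    "\<forall>z. {v, z} \<in> E \<longrightarrow> z \<noteq> y \<longrightarrow> z \<noteq> x
       \<longrightarrow> degree E z < k \<and> (misses {e\<in>E. v \<notin> e} f' z a \<longrightarrow> Suc (degree E z) < k)"
proof -
  define F where "F = {e\<in>E. v \<notin> e}"
  obtain \<beta> x where "\<beta> < k" and x: "\<forall>z. {v, z} \<in> E \<longrightarrow> z \<noteq> y0 \<longrightarrow> k \<le> Suc (degree E z)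
    \<longrightarrow> misses F f z \<beta> \<longrightarrow> z = x"
    using exists_colour_rarely_missed[OF fin two f dv y0 lt] unfolding F_def by blast
  have small: "degree E z < k \<and> (misses F f'' z \<beta> \<longrightarrow> Suc (degree E z) < k)"
    if "{v, z} \<in> E" "z \<noteq> y0" "misses F f'' z \<beta> \<Longrightarrow> \<not> k \<le> Suc (degree E z)" for z f''
    using lt that by auto
  consider "misses F f y0 \<beta>"
    | z1 where "\<not> misses F f y0 \<beta>" "{v, z1} \<in> E" "z1 \<noteq> y0" "k \<le> Suc (degree E z1)" "misses F f z1 \<beta>"
    | "\<not> misses F f y0 \<beta>"
      "\<forall>z. {v, z} \<in> E \<longrightarrow> z \<noteq> y0 \<longrightarrow> k \<le> Suc (degree E z) \<longrightarrow> \<not> misses F f z \<beta>"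
    by blast
  then show ?thesis
  proof cases
    case 1
    show ?thesis
    proof (rule that[of f y0 \<beta> x, folded F_def])
      show "\<forall>z. {v, z} \<in> E \<longrightarrow> z \<noteq> y0 \<longrightarrow> z \<noteq> x
          \<longrightarrow> degree E z < k \<and> (misses F f z \<beta> \<longrightarrow> Suc (degree E z) < k)"
        using small x by blast
    qed (use f y0 \<open>\<beta> < k\<close> 1 lt in \<open>simp_all add: F_def\<close>)
  next
    case 2
    then have "z1 = x" using x by blast
    show ?thesis
    proof (rule that[of f z1 \<beta> y0, folded F_def])
      show "\<forall>z. {v, z} \<in> E \<longrightarrow> z \<noteq> z1 \<longrightarrow> misses F f z \<beta> \<longrightarrow> degree E z < k"
        using lt 2 by blast
      show "\<forall>z. {v, z} \<in> E \<longrightarrow> z \<noteq> z1 \<longrightarrow> z \<noteq> y0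
          \<longrightarrow> degree E z < k \<and> (misses F f z \<beta> \<longrightarrow> Suc (degree E z) < k)"
        using small x \<open>z1 = x\<close> by blast
    qed (use f \<open>\<beta> < k\<close> 2 in \<open>simp_all add: F_def\<close>)
  next
    case 3
    have "card {a. a < k \<and> misses F f y0 a} \<noteq> 0"
      using card_missing_colours_neighbour[OF fin two f y0] le y0 unfolding F_def by auto
    then obtain \<alpha> where "\<alpha> < k" "misses F f y0 \<alpha>" by (metis (no_types, lifting) Collect_empty_eq card.empty)
    moreover have "\<alpha> \<noteq> \<beta>" using 3 calculation by blast
    moreover have "finite F" "\<forall>e\<in>F. card e = 2" using fin two unfolding F_def by simp_all
    ultimately obtain f' u where f': "proper_edge_colouring F k f'" "misses F f' y0 \<beta>"
      and changed: "\<And>z. z \<noteq> y0 \<Longrightarrow> z \<noteq> u \<Longrightarrow> misses F f' z \<beta> \<Longrightarrow> misses F f z \<beta>"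
      using kempe_chain[of F k f \<alpha> \<beta> y0] f \<open>\<beta> < k\<close> 3 unfolding F_def by blast
    show ?thesis
    proof (rule that[of f' y0 \<beta> u, folded F_def])
      show "\<forall>z. {v, z} \<in> E \<longrightarrow> z \<noteq> y0 \<longrightarrow> z \<noteq> u
          \<longrightarrow> degree E z < k \<and> (misses F f' z \<beta> \<longrightarrow> Suc (degree E z) < k)"
        using small changed 3 by blast
    qed (use f' y0 \<open>\<beta> < k\<close> lt in \<open>simp_all add: F_def\<close>)
  qed
qed

lemma delete_edge_and_colour_class:
  assumes fin: "finite E" and two: "\<forall>e\<in>E. card e = 2"
    and f: "proper_edge_colouring {e\<in>E. v \<notin> e} k f"
    and y: "{v, y} \<in> E" and ya: "misses {e\<in>E. v \<notin> e} f y a"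
    and M: "M = insert {v, y} {e\<in>E. v \<notin> e \<and> f e = a}"
  shows "matching M" "{e\<in>E - M. v \<notin> e} = {e\<in>{e\<in>E. v \<notin> e}. f e \<noteq> a}"
    "degree (E - M) v = degree E v - 1"
    "\<And>z. {v, z} \<in> E - M \<Longrightarrow> {v, z} \<in> E \<and> z \<noteq> y
       \<and> degree (E - M) z = degree E z - (if misses {e\<in>E. v \<notin> e} f z a then 0 else 1)"
proof -
  have "M \<subseteq> E" using y unfolding M by auto
  show "matching M"
    using matching_colour_class[OF f, of a] ya unfolding M matching_def misses_def by auto
  then have deg: "degree (E - M) z = degree E z - (if \<exists>e\<in>M. z \<in> e then 1 else 0)" for z
    using degree_Diff_matching[OF fin \<open>M \<subseteq> E\<close>] by blast
  show "{e\<in>E - M. v \<notin> e} = {e\<in>{e\<in>E. v \<notin> e}. f e \<noteq> a}" unfolding M by auto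
  show "degree (E - M) v = degree E v - 1" using deg[of v] unfolding M by auto
  fix z assume "{v, z} \<in> E - M"
  then have z: "{v, z} \<in> E" "z \<noteq> y" "z \<noteq> v" using edge_endpoints_distinct[OF two] unfolding M by auto
  then have "(\<exists>e\<in>M. z \<in> e) \<longleftrightarrow> \<not> misses {e\<in>E. v \<notin> e} f z a" unfolding M misses_def by auto
  then show "{v, z} \<in> E \<and> z \<noteq> y
      \<and> degree (E - M) z = degree E z - (if misses {e\<in>E. v \<notin> e} f z a then 0 else 1)"
    using z deg[of z] by simp
qed

text \<open>Ehrenfeucht, Faber and Kierstead: induction on the degree of v, deleting an edge vy and a
  whole colour class and reusing that colour for them.\<close>

lemma proper_edge_colouring_extend_vertex:
  assumes "finite E" "\<forall>e\<in>E. card e = 2" "proper_edge_colouring {e\<in>E. v \<notin> e} k f"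
    "degree E v \<le> k" "\<forall>z. {v, z} \<in> E \<longrightarrow> degree E z \<le> k"
    "\<forall>z. {v, z} \<in> E \<longrightarrow> z \<noteq> x \<longrightarrow> degree E z < k"
  shows "\<exists>c. proper_edge_colouring E k c"
  using assms
proof (induction "degree E v" arbitrary: E k f x rule: less_induct)
  case less
  note fin = less.prems(1) and two = less.prems(2) and f = less.prems(3)
  show ?case
  proof (cases "degree E v = 0")
    case True
    then have "{e\<in>E. v \<notin> e} = E" using fin unfolding degree_def by auto
    then show ?thesis using f by auto
  next
    case False
    then obtain w where "{v, w} \<in> E"
      using fin two unfolding degree_def by (auto elim!: card_2_obtain[of _ v])
    then obtain y0 where y0: "{v, y0} \<in> E" "\<forall>z. {v, z} \<in> E \<longrightarrow> z \<noteq> y0 \<longrightarrow> degree E z < k"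
      using less.prems(6) by blast
    obtain f' y a x' where f': "proper_edge_colouring {e\<in>E. v \<notin> e} k f'" and y: "{v, y} \<in> E"
      and "a < k" and ya: "misses {e\<in>E. v \<notin> e} f' y a"
      and missing_lt: "\<forall>z. {v, z} \<in> E \<longrightarrow> z \<noteq> y \<longrightarrow> misses {e\<in>E. v \<notin> e} f' z a \<longrightarrow> degree E z < k"
      and others_lt: "\<forall>z. {v, z} \<in> E \<longrightarrow> z \<noteq> y \<longrightarrow> z \<noteq> x'
         \<longrightarrow> degree E z < k \<and> (misses {e\<in>E. v \<notin> e} f' z a \<longrightarrow> Suc (degree E z) < k)"
      by (rule exists_reducing_colour[OF fin two f less.prems(4) y0(1) less.prems(5) y0(2)])
    then obtain k' where k': "k = Suc k'" using less_imp_Suc_add by blast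
    define M where "M = insert {v, y} {e\<in>E. v \<notin> e \<and> f' e = a}"
    note M = delete_edge_and_colour_class[OF fin two f' y ya M_def]
    have "proper_edge_colouring {e\<in>E - M. v \<notin> e} k' (\<lambda>e. if f' e = k' then a else f' e)"
      using proper_edge_colouring_remove_colour[OF f'[unfolded k']] \<open>a < k\<close> k' M(2) by simp
    moreover have "degree (E - M) v < degree E v" "degree (E - M) v \<le> k'"
      using M(3) False less.prems(4) k' by auto
    moreover have "degree (E - M) z \<le> k'" if "{v, z} \<in> E - M" for z
      using M(4)[OF that] missing_lt less.prems(5) k' by auto
    moreover have "degree (E - M) z < k'" if "{v, z} \<in> E - M" "z \<noteq> x'" for z
    proof -
      have "{v, z} \<in> E" using M(4)[OF that(1)] by blast
      then show ?thesis
        using M(4)[OF that(1)] that(2) others_lt degree_delete_vertex(2)[OF fin two \<open>{v, z} \<in> E\<close>] k'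
        by auto
    qed
    ultimately obtain c' where "proper_edge_colouring (E - M) k' c'"
      using less.hyps[of "E - M" k' _ x'] fin two by blast
    then show ?thesis using proper_edge_colouring_add_matching M(1) k' by blast
  qed
qed

theorem vizing:
  assumes "finite E" "\<forall>e\<in>E. card e = 2" "\<forall>v. degree E v \<le> k"
  shows "\<exists>c. proper_edge_colouring E (Suc k) c"
  using assms
proof (induction "card E" arbitrary: E rule: less_induct)
  case less
  show ?case
  proof (cases "E = {}")
    case True
    then show ?thesis by (auto simp: proper_edge_colouring_def)
  next
    case False
    then obtain e v where "e \<in> E" "v \<in> e" using less.prems(2) by fastforce
    define F where "F = {e\<in>E. v \<notin> e}"
    have "F \<subset> E" using \<open>e \<in> E\<close> \<open>v \<in> e\<close> unfolding F_def by blast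
    then have "card F < card E" using less.prems(1) by (rule psubset_card_mono[rotated])
    moreover have "degree F z \<le> degree E z" for z
      using less.prems(1) \<open>F \<subset> E\<close> unfolding degree_def by (intro card_mono) auto
    ultimately obtain f where "proper_edge_colouring F (Suc k) f"
      using less.hyps[of F] less.prems order_trans unfolding F_def by fastforce
    then show ?thesis
      using proper_edge_colouring_extend_vertex[of E v "Suc k" f v] less.prems unfolding F_def
      by (simp add: le_Suc_eq less_Suc_eq_le)
  qed
qed

lemma chromatic_index_bounds:
  assumes "simple_graph V E" "V \<noteq> {}"
  shows "\<exists>c. proper_edge_colouring E (chromatic_index E) c"
    "chromatic_index E \<le> Suc (max_degree V E)" "max_degree V E \<le> chromatic_index E"
proof -
  have vizing: "\<exists>c. proper_edge_colouring E (Suc (max_degree V E)) c"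
    using vizing[OF simple_graph_finite_edges[OF assms(1)]] degree_le_max_degree[OF assms(1)]
      assms(1) unfolding simple_graph_def by blast
  then have "\<exists>k c. proper_edge_colouring E k c" by blast
  then show "\<exists>c. proper_edge_colouring E (chromatic_index E) c"
    unfolding chromatic_index_def by (rule LeastI_ex)
  then show "max_degree V E \<le> chromatic_index E" using max_degree_le_colours[OF assms] by blast
  show "chromatic_index E \<le> Suc (max_degree V E)"
    unfolding chromatic_index_def by (rule Least_le) (rule vizing)
qed

section \<open>Properly rainbow connected colourings\<close>

lemma proper_edge_colouring_fresh_colours:
  assumes c0: "proper_edge_colouring E q c0" and "T \<subseteq> E" "finite T"
  obtains c where "proper_edge_colouring E (q + card T) c" "inj_on c T" "\<forall>e\<in>T. q \<le> c e"
    "\<forall>e\<in>E - T. c e = c0 e"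
proof -
  obtain idx where idx: "bij_betw idx T {0..<card T}" using ex_bij_betw_finite_nat[OF assms(3)] by blast
  define c where "c e = (if e \<in> T then q + idx e else c0 e)" for e
  have idx_lt: "idx e < card T" if "e \<in> T" for e using idx that by (auto simp: bij_betw_def)
  have c0_lt: "c0 e < q" if "e \<in> E" for e using c0 that by (auto simp: proper_edge_colouring_def)
  have inj: "inj_on c T" using idx unfolding c_def bij_betw_def inj_on_def by simp
  show ?thesis
  proof (rule that)
    show "proper_edge_colouring E (q + card T) c"
      unfolding proper_edge_colouring_def
    proof (intro conjI ballI impI)
      show "c ` E \<subseteq> {..<q + card T}" using idx_lt c0_lt unfolding c_def by fastforce
      fix e1 e2 assume e: "e1 \<in> E" "e2 \<in> E" "e1 \<noteq> e2 \<and> e1 \<inter> e2 \<noteq> {}"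
      show "c e1 \<noteq> c e2"
      proof
        assume eq: "c e1 = c e2"
        have fresh_iff: "e \<in> T \<longleftrightarrow> q \<le> c e" if "e \<in> E" for e
          using c0_lt[OF that] unfolding c_def by auto
        have "e1 \<in> T \<longleftrightarrow> e2 \<in> T" using fresh_iff[OF e(1)] fresh_iff[OF e(2)] eq by simp
        then consider "e1 \<in> T" "e2 \<in> T" | "e1 \<notin> T" "e2 \<notin> T" by blast
        then show False
        proof cases
          case 1
          then show False using inj eq e(3) by (simp add: inj_on_eq_iff)
        next
          case 2
          then have "c0 e1 = c0 e2" using eq unfolding c_def by simp
          then show False using c0 e unfolding proper_edge_colouring_def by blast
        qed
      qed
    qed
  qed (use inj in \<open>simp_all add: c_def\<close>)
qed

lemma properly_rainbow_connected_if_inj_on_connected: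
  assumes "T \<subseteq> E" "connected_graph V T" "inj_on c T"
  shows "properly_rainbow_connected V E c"
  unfolding properly_rainbow_connected_def
proof (intro ballI impI)
  fix u w assume "u \<in> V" "w \<in> V"
  then obtain p where p: "is_path V T p u w" using assms(2) unfolding connected_graph_def by blast
  then have "is_path V E p u w" using assms(1) unfolding is_path_def by blast
  moreover have "distinct (map c (path_edges p))"
    using distinct_path_edges[of p] p assms(3) unfolding is_path_def
    by (simp add: distinct_map inj_on_subset subsetI)
  ultimately show "\<exists>p. rainbow_path V E c p u w" unfolding rainbow_path_def by blast
qed

lemma star_extends_to_connected_subgraph:
  assumes sg: "simple_graph V E" and conn: "connected_graph V E" and v0: "v0 \<in> V"
  obtains T where "T \<subseteq> {e\<in>E. v0 \<notin> e}" "card T = card (V - {v0} - {z. {v0, z} \<in> E})"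
    "connected_graph V (T \<union> {e\<in>E. v0 \<in> e})"
proof -
  define N where "N = {z. {v0, z} \<in> E}"
  define D where "D = V - {v0} - N"
  define S where "S = {e\<in>E. v0 \<in> e}"
  define r where "r u = dist V E u v0" for u
  have "\<forall>u\<in>D. \<exists>w. {u, w} \<in> E \<and> w \<in> V \<and> r w < r u"
    using exists_closer_neighbour[OF conn _ v0] unfolding D_def r_def by (metis Diff_iff singletonI)
  then obtain par where par: "\<And>u. u \<in> D \<Longrightarrow> {u, par u} \<in> E \<and> par u \<in> V \<and> r (par u) < r u"
    by metis
  define T where "T = (\<lambda>u. {u, par u}) ` D"
  have "v0 \<notin> {u, par u}" if "u \<in> D" for u
    using that par[OF that] unfolding D_def N_def by (auto simp: insert_commute)
  then have T_sub: "T \<subseteq> {e\<in>E. v0 \<notin> e}" using par unfolding T_def by auto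
  have "inj_on (\<lambda>u. {u, par u}) D"
  proof (rule inj_onI)
    fix u u' assume "u \<in> D" "u' \<in> D" "{u, par u} = {u', par u'}"
    then show "u = u'" using par[of u] par[of u'] by (auto simp: doubleton_eq_iff)
  qed
  then have card_T: "card T = card D" unfolding T_def by (rule card_image)
  have reach: "(adj (T \<union> S))\<^sup>*\<^sup>* u v0" if "u \<in> V" for u
    using that
  proof (induction "r u" arbitrary: u rule: less_induct)
    case less
    consider "u = v0" | "u \<in> N" | "u \<in> D" using less.prems unfolding D_def by blast
    then show ?case
    proof cases
      case 2
      then have "adj (T \<union> S) u v0" unfolding N_def S_def adj_def by (simp add: insert_commute)
      then show ?thesis by simp
    next
      case 3
      then have "adj (T \<union> S) u (par u)" unfolding T_def adj_def by blast
      moreover have "(adj (T \<union> S))\<^sup>*\<^sup>* (par u) v0" using less.hyps par[OF 3] by blast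
      ultimately show ?thesis by (rule converse_rtranclp_into_rtranclp)
    qed simp
  qed
  have "\<forall>e\<in>T \<union> S. e \<subseteq> V" using T_sub sg unfolding S_def simple_graph_def by blast
  then have "connected_graph V (T \<union> S)"
    using connected_graph_if_reaches_root[OF _ v0] reach by blast
  with T_sub card_T show ?thesis using that unfolding D_def N_def S_def by blast
qed

lemma exists_properly_rainbow_connected_colouring:
  assumes sg: "simple_graph V E" and "connected_graph V E" "v0 \<in> V"
    and c0: "proper_edge_colouring E q c0"
  obtains c where "proper_edge_colouring E (q + card (V - {v0} - {z. {v0, z} \<in> E})) c"
    "properly_rainbow_connected V E c"
proof -
  define S where "S = {e\<in>E. v0 \<in> e}"
  obtain T where T: "T \<subseteq> {e\<in>E. v0 \<notin> e}" and card_T: "card T = card (V - {v0} - {z. {v0, z} \<in> E})"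
    and conn: "connected_graph V (T \<union> S)"
    by (rule star_extends_to_connected_subgraph[OF assms(1-3), folded S_def])
  have "T \<subseteq> E" using T by blast
  moreover from this have "finite T" using simple_graph_finite_edges[OF sg] by (rule finite_subset)
  ultimately obtain c where c: "proper_edge_colouring E (q + card T) c" "inj_on c T"
    and fresh: "\<forall>e\<in>T. q \<le> c e" and old: "\<forall>e\<in>E - T. c e = c0 e"
    by (rule proper_edge_colouring_fresh_colours[OF c0])
  have "S \<subseteq> E - T" using T unfolding S_def by blast
  then have old_S: "\<forall>e\<in>S. c e = c0 e" using old by blast
  have "inj_on c S \<longleftrightarrow> inj_on c0 S" by (rule inj_on_cong) (use old_S in blast)
  then have "inj_on c S" using proper_edge_colouring_inj_on_star[OF c0, of v0] unfolding S_def by blast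
  moreover have "\<forall>e\<in>S. c e < q"
    using old_S \<open>S \<subseteq> E - T\<close> c0 unfolding proper_edge_colouring_def by force
  ultimately have "inj_on c (T \<union> S)" using c(2) fresh unfolding inj_on_Un by fastforce
  moreover have "T \<union> S \<subseteq> E" using T unfolding S_def by blast
  ultimately have "properly_rainbow_connected V E c"
    using properly_rainbow_connected_if_inj_on_connected[OF _ conn] by blast
  with c(1) card_T show ?thesis by (intro that) simp_all
qed

lemma prc_le:
  assumes "proper_edge_colouring E k c" "properly_rainbow_connected V E c"
  shows "prc V E \<le> k" "\<exists>c. proper_edge_colouring E (prc V E) c \<and> properly_rainbow_connected V E c"
proof -
  show "prc V E \<le> k" unfolding prc_def by (rule Least_le) (use assms in blast)
  have "\<exists>k c. proper_edge_colouring E k c \<and> properly_rainbow_connected V E c" using assms by blast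
  then show "\<exists>c. proper_edge_colouring E (prc V E) c \<and> properly_rainbow_connected V E c"
    unfolding prc_def by (rule LeastI_ex)
qed

lemma diam_le_colours:
  assumes "simple_graph V E" "V \<noteq> {}" "proper_edge_colouring E k c" "properly_rainbow_connected V E c"
  shows "diam V E \<le> k"
proof -
  have "dist V E u w \<le> k" if uw: "u \<in> V" "w \<in> V" for u w
  proof (cases "u = w")
    case True
    then have "is_path V E [u] u w" using uw by (simp add: is_path_def)
    then show ?thesis using dist_le_length[of V E "[u]" u w] by simp
  next
    case False
    then obtain p where p: "is_path V E p u w" and "distinct (map c (path_edges p))"
      using assms(4) uw False unfolding properly_rainbow_connected_def rainbow_path_def by blast
    then have "length (path_edges p) = card (c ` set (path_edges p))"
      by (metis distinct_card length_map set_map)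
    also have "\<dots> \<le> card {..<k}"
    proof (rule card_mono)
      have "set (path_edges p) \<subseteq> E" using p unfolding is_path_def by blast
      then show "c ` set (path_edges p) \<subseteq> {..<k}"
        using assms(3) unfolding proper_edge_colouring_def by blast
    qed simp
    finally show ?thesis using dist_le_length[OF p] by simp
  qed
  moreover have "{dist V E u v |u v. u \<in> V \<and> v \<in> V} = (\<lambda>(u, v). dist V E u v) ` (V \<times> V)" by auto
  then have "finite {dist V E u v |u v. u \<in> V \<and> v \<in> V}"
    using assms(1) unfolding simple_graph_def by simp
  moreover obtain u where "u \<in> V" using assms(2) by blast
  then have "{dist V E u v |u v. u \<in> V \<and> v \<in> V} \<noteq> {}" by blast
  ultimately show ?thesis unfolding diam_def by (subst Max_le_iff) auto
qed

theorem theorem2p2: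
  fixes V :: "'a set" and E :: "'a set set"
  assumes "simple_graph V E" and "connected_graph V E" and "card V \<ge> 2"
  shows "max (max_degree V E) (diam V E) \<le> prc V E
       \<and> prc V E \<le> chromatic_index E + (card V - 1 - max_degree V E)
       \<and> (class2 V E \<longrightarrow> chromatic_index E + (card V - 1 - max_degree V E) = card V)
       \<and> (class1 V E \<longrightarrow> chromatic_index E + (card V - 1 - max_degree V E) = card V - 1)"
proof -
  have V: "V \<noteq> {}" using assms(3) by auto
  obtain v0 where v0: "v0 \<in> V" "degree E v0 = max_degree V E"
    using max_degree_attained[OF assms(1) V] .
  note non_neighbours = card_non_neighbours[OF assms(1) v0(1), unfolded v0(2)]
  obtain c0 where "proper_edge_colouring E (chromatic_index E) c0"
    using chromatic_index_bounds(1)[OF assms(1) V] by blast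
  then obtain c where "proper_edge_colouring E (chromatic_index E + (card V - 1 - max_degree V E)) c"
    and "properly_rainbow_connected V E c"
    by (rule exists_properly_rainbow_connected_colouring[OF assms(1,2) v0(1),
          unfolded non_neighbours(1)])
  then have upper: "prc V E \<le> chromatic_index E + (card V - 1 - max_degree V E)"
    and "\<exists>c. proper_edge_colouring E (prc V E) c \<and> properly_rainbow_connected V E c"
    by (rule prc_le)+
  then obtain c' where "proper_edge_colouring E (prc V E) c'" "properly_rainbow_connected V E c'"
    by blast
  then have "max_degree V E \<le> prc V E" "diam V E \<le> prc V E"
    using max_degree_le_colours[OF assms(1) V] diam_le_colours[OF assms(1) V] by blast+
  moreover have "max_degree V E \<le> chromatic_index E" "chromatic_index E \<le> Suc (max_degree V E)"
    using chromatic_index_bounds[OF assms(1) V] by simp_all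
  ultimately show ?thesis
    using upper non_neighbours(2) assms(3) unfolding class2_def class1_def by auto
qed

end
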